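(* Let $m\ge1$, let $(t_{i,j})$ be positive reals with $t_{i+m,j-m}=t_{i,j}$ and $t_{i+2,j+2}=t_{i,j}$, and let $T_{i,j,k}$ be the solution of the $T$-system with initial data $T_{i,j,(i+j+1\bmod2)}=t_{i,j}$. For $k\ge1$, $i+j+k\equiv0\pmod2$, let $L_{i,j,k}=\frac{T_{i+1,j,k}T_{i-1,j,k}}{T_{i,j,k+1}T_{i,j,k-1}}$ and $R_{i,j,k}=\frac{T_{i,j+1,k}T_{i,j-1,k}}{T_{i,j,k+1}T_{i,j,k-1}}$. Then for all such $(i,j,k)$, $$L_{i+2,j+2,k}=L_{i,j,k},\quad L_{i+m,j-m,k}=L_{i,j,k},\quad L_{i+1,j+1,k+2}=L_{i,j,k},$$ and the same three identities hold for $R$.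
   Context: The $T$-system is $T_{i,j,k+1}T_{i,j,k-1}=T_{i+1,j,k}T_{i-1,j,k}+T_{i,j+1,k}T_{i,j-1,k}$ for $k\ge1$, $i+j+k\equiv0\pmod2$, on points $(i,j,k)\in\mathbb{Z}^2\times\mathbb{Z}_{\ge0}$ with $i+j+k\equiv1\pmod2$. *)

theory Defs
  imports Complex_Main
begin

text \<open>Solution of the T-system on int x int x nat with initial data
  T(i,j,k0) = t(i,j) where k0 = (i+j+1) mod 2. Values at points with
  i+j+k even (off the lattice) are irrelevant junk; the recursion for
  lattice points only refers to lattice points.\<close>
fun Tsys :: "(int \<Rightarrow> int \<Rightarrow> real) \<Rightarrow> int \<Rightarrow> int \<Rightarrow> nat \<Rightarrow> real" where
  "Tsys t i j 0 = t i j"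
| "Tsys t i j (Suc 0) = t i j"
| "Tsys t i j (Suc (Suc k)) =
     (Tsys t (i+1) j (Suc k) * Tsys t (i-1) j (Suc k)
      + Tsys t i (j+1) (Suc k) * Tsys t i (j-1) (Suc k)) / Tsys t i j k"

definition Lsys :: "(int \<Rightarrow> int \<Rightarrow> real) \<Rightarrow> int \<Rightarrow> int \<Rightarrow> nat \<Rightarrow> real" where
  "Lsys t i j k = (Tsys t (i+1) j k * Tsys t (i-1) j k) / (Tsys t i j (k+1) * Tsys t i j (k-1))"

definition Rsys :: "(int \<Rightarrow> int \<Rightarrow> real) \<Rightarrow> int \<Rightarrow> int \<Rightarrow> nat \<Rightarrow> real" where
  "Rsys t i j k = (Tsys t i (j+1) k * Tsys t i (j-1) k) / (Tsys t i j (k+1) * Tsys t i j (k-1))"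

end

theory Submission
  imports Defs
begin

text \<open>Write \<open>E_k = T(i+1,j,k) T(i-1,j,k)\<close> and \<open>F_k = T(i,j+1,k) T(i,j-1,k)\<close>, so that the
  T-system relation reads \<open>T(i,j,k+1) T(i,j,k-1) = E_k + F_k\<close>, i.e. \<open>L + R = 1\<close>.
  Translation invariance of the initial data passes to the whole solution, which settles the
  two shifts in the \<open>(i,j)\<close>-plane. Under the diagonal period 2, the relation at \<open>(i+1,j+1)\<close> and
  at \<open>(i,j)\<close> has the same right-hand side, so the denominator \<open>T(i,j,k+1) T(i,j,k-1)\<close> is
  constant along diagonals and \<open>L(i+1,j+1,k) = R(i,j,k)\<close>. Moreover \<open>E_k E_(k+2)\<close> and
  \<open>F_k F_(k+2)\<close> are products of such denominators at diagonally adjacent points, hence equal;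
  this gives \<open>L_k L_(k+2) = R_k R_(k+2)\<close>, which together with \<open>L + R = 1\<close> forces
  \<open>L_(k+2) = R_k\<close> and \<open>R_(k+2) = L_k\<close>.\<close>

lemma complementary_pairs_cross:
  fixes a b c d :: real
  assumes "a + b = 1" "c + d = 1" "a * c = b * d"
  shows "c = b"
proof -
  have "b = 1 - a" "d = 1 - c" using assms(1,2) by linarith+
  with assms(3) have "a * c = (1 - a) * (1 - c)" by simp
  then have "a + c = 1" by (simp add: algebra_simps)
  with assms(1) show ?thesis by linarith
qed

context
  fixes t :: "int \<Rightarrow> int \<Rightarrow> real"
begin

lemma Tsys_translate:
  assumes "\<And>i j. t (i+a) (j+b) = t i j"
  shows "Tsys t (i+a) (j+b) k = Tsys t i j k"
proof (induction k arbitrary: i j rule: induct_nat_012)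
  case (ge2 k)
  have "i + a + 1 = (i+1) + a" "i + a - 1 = (i-1) + a" "j + b + 1 = (j+1) + b" "j + b - 1 = (j-1) + b"
    by simp_all
  with ge2 show ?case by (simp only: Tsys.simps)
qed (simp_all add: assms)

lemma Lsys_translate:
  assumes "\<And>i j. t (i+a) (j+b) = t i j"
  shows "Lsys t (i+a) (j+b) k = Lsys t i j k"
  using Tsys_translate[OF assms, of "i+1" j] Tsys_translate[OF assms, of "i-1" j]
    Tsys_translate[OF assms, of i j]
  by (simp add: Lsys_def algebra_simps)

lemma Rsys_translate:
  assumes "\<And>i j. t (i+a) (j+b) = t i j"
  shows "Rsys t (i+a) (j+b) k = Rsys t i j k"
  using Tsys_translate[OF assms, of i "j+1"] Tsys_translate[OF assms, of i "j-1"]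
    Tsys_translate[OF assms, of i j]
  by (simp add: Rsys_def algebra_simps)

context
  assumes pos: "\<And>i j. t i j > 0"
begin

lemma Tsys_pos: "Tsys t i j k > 0"
proof (induction k arbitrary: i j rule: induct_nat_012)
  case (ge2 k)
  then show ?case by (auto intro!: divide_pos_pos add_pos_pos mult_pos_pos)
qed (simp_all add: pos)

lemma Tsys_relation:
  "Tsys t i j (k+2) * Tsys t i j k =
    Tsys t (i+1) j (k+1) * Tsys t (i-1) j (k+1) + Tsys t i (j+1) (k+1) * Tsys t i (j-1) (k+1)"
  using Tsys_pos[of i j k] by simp

declare Tsys.simps(3) [simp del]

lemma Lsys_add_Rsys: "Lsys t i j (Suc k) + Rsys t i j (Suc k) = 1"
proof -
  have "Tsys t i j (Suc k + 1) * Tsys t i j (Suc k - 1) =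
      Tsys t (i+1) j (Suc k) * Tsys t (i-1) j (Suc k) + Tsys t i (j+1) (Suc k) * Tsys t i (j-1) (Suc k)"
    using Tsys_relation[of i j k] by simp
  moreover have "Tsys t i j (Suc k + 1) * Tsys t i j (Suc k - 1) > 0"
    using Tsys_pos by (simp add: mult_pos_pos)
  ultimately show ?thesis
    unfolding Lsys_def Rsys_def by (simp add: add_divide_distrib [symmetric])
qed

context
  assumes diag: "\<And>i j. t (i+2) (j+2) = t i j"
begin

lemma Tsys_diagonal_denominator:
  "Tsys t (i+1) (j+1) (k+2) * Tsys t (i+1) (j+1) k = Tsys t i j (k+2) * Tsys t i j k"
proof -
  have "Tsys t (i+2) (j+1) (k+1) = Tsys t i (j-1) (k+1)"
    using Tsys_translate[OF diag, of i "j-1"] by (simp add: algebra_simps)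
  moreover have "Tsys t (i+1) (j+2) (k+1) = Tsys t (i-1) j (k+1)"
    using Tsys_translate[OF diag, of "i-1" j] by (simp add: algebra_simps)
  ultimately show ?thesis
    using Tsys_relation[of "i+1" "j+1" k] Tsys_relation[of i j k]
    by (simp add: algebra_simps)
qed

lemma Lsys_diagonal: "Lsys t (i+1) (j+1) (Suc k) = Rsys t i j (Suc k)"
proof -
  have "Tsys t (i+1+1) (j+1) (Suc k) = Tsys t i (j-1) (Suc k)"
    using Tsys_translate[OF diag, of i "j-1"] by (simp add: algebra_simps)
  then show ?thesis
    using Tsys_diagonal_denominator[of i j k] by (simp add: Lsys_def Rsys_def mult.commute)
qed

lemma Rsys_diagonal: "Rsys t (i+1) (j+1) (Suc k) = Lsys t i j (Suc k)"
proof -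
  have "Tsys t (i+1) (j+1+1) (Suc k) = Tsys t (i-1) j (Suc k)"
    using Tsys_translate[OF diag, of "i-1" j] by (simp add: algebra_simps)
  then show ?thesis
    using Tsys_diagonal_denominator[of i j k] by (simp add: Lsys_def Rsys_def mult.commute)
qed

text \<open>The two products have the same denominator; the numerators \<open>E_k E_(k+2)\<close> and
  \<open>F_k F_(k+2)\<close> are the products of the denominators at \<open>(i\<plusminus>1,j)\<close> resp. \<open>(i,j\<plusminus>1)\<close>, which
  are pairwise diagonal neighbours.\<close>
lemma Lsys_mult_Lsys_eq_Rsys_mult_Rsys:
  "Lsys t i j (Suc k) * Lsys t i j (k+3) = Rsys t i j (Suc k) * Rsys t i j (k+3)"
proof -
  let ?T = "Tsys t"
  have left: "?T (i+1) j (k+3) * ?T (i+1) j (Suc k) = ?T i (j-1) (k+3) * ?T i (j-1) (Suc k)"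
    using Tsys_diagonal_denominator[of i "j-1" "Suc k"] by (simp add: numeral_3_eq_3)
  have right: "?T (i-1) j (k+3) * ?T (i-1) j (Suc k) = ?T i (j+1) (k+3) * ?T i (j+1) (Suc k)"
    using Tsys_diagonal_denominator[of "i-1" j "Suc k"] by (simp add: numeral_3_eq_3)
  have "(?T (i+1) j (Suc k) * ?T (i-1) j (Suc k)) * (?T (i+1) j (k+3) * ?T (i-1) j (k+3)) =
      (?T (i+1) j (k+3) * ?T (i+1) j (Suc k)) * (?T (i-1) j (k+3) * ?T (i-1) j (Suc k))"
    by (simp only: mult_ac)
  also have "\<dots> = (?T i (j-1) (k+3) * ?T i (j-1) (Suc k)) * (?T i (j+1) (k+3) * ?T i (j+1) (Suc k))"
    by (simp only: left right)
  also have "\<dots> = (?T i (j+1) (Suc k) * ?T i (j-1) (Suc k)) * (?T i (j+1) (k+3) * ?T i (j-1) (k+3))"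
    by (simp only: mult_ac)
  finally show ?thesis
    unfolding Lsys_def Rsys_def times_divide_times_eq by (simp only:)
qed

lemma Lsys_add_two: "Lsys t i j (k+3) = Rsys t i j (Suc k)"
  using complementary_pairs_cross[OF Lsys_add_Rsys _ Lsys_mult_Lsys_eq_Rsys_mult_Rsys, of i j k]
    Lsys_add_Rsys[of i j "k+2"]
  by (simp add: numeral_3_eq_3)

lemma Rsys_add_two: "Rsys t i j (k+3) = Lsys t i j (Suc k)"
  using complementary_pairs_cross[OF _ _ Lsys_mult_Lsys_eq_Rsys_mult_Rsys[symmetric], of i j k]
    Lsys_add_Rsys[of i j k] Lsys_add_Rsys[of i j "k+2"]
  by (simp add: numeral_3_eq_3 add.commute)

end

end

end

theorem mainTheorem7:
  fixes t :: "int \<Rightarrow> int \<Rightarrow> real" and m :: int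
  assumes "m \<ge> 1"
    and "\<And>i j. t i j > 0"
    and "\<And>i j. t (i+m) (j-m) = t i j"
    and "\<And>i j. t (i+2) (j+2) = t i j"
  shows "\<forall>i j (k::nat). k \<ge> 1 \<and> even (i + j + int k) \<longrightarrow>
      Lsys t (i+2) (j+2) k = Lsys t i j k \<and>
      Lsys t (i+m) (j-m) k = Lsys t i j k \<and>
      Lsys t (i+1) (j+1) (k+2) = Lsys t i j k \<and>
      Rsys t (i+2) (j+2) k = Rsys t i j k \<and>
      Rsys t (i+m) (j-m) k = Rsys t i j k \<and>
      Rsys t (i+1) (j+1) (k+2) = Rsys t i j k"
proof -
  have anti: "\<And>i j. t (i+m) (j+(-m)) = t i j" using assms(3) by simp
  have glide: "Lsys t (i+1) (j+1) (k+2) = Lsys t i j k \<and> Rsys t (i+1) (j+1) (k+2) = Rsys t i j k"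
    if k: "k \<ge> 1" for i j k
  proof -
    obtain n where "k = Suc n" using k by (cases k) auto
    then show ?thesis
      using Lsys_diagonal[where t=t, OF assms(2,4), of i j "n+2"]
        Rsys_diagonal[where t=t, OF assms(2,4), of i j "n+2"]
        Lsys_add_two[where t=t, OF assms(2,4), of i j n]
        Rsys_add_two[where t=t, OF assms(2,4), of i j n]
      by (simp add: numeral_3_eq_3)
  qed
  show ?thesis
    using glide Lsys_translate[where t=t, OF assms(4)] Rsys_translate[where t=t, OF assms(4)]
      Lsys_translate[where t=t, OF anti] Rsys_translate[where t=t, OF anti]
    by simp
qed

end
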